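(* Let $\delta$ be a classifier and $t\ge 0$. If $\delta$ is not null, then for each $\beta\in\{0,1\}$ the conditional payoff $V_\beta(r)$ is strictly quasiconcave in $r\in\mathbb{R}$ and attains its maximum at some (finite) $r\in\mathbb{R}$. If $\delta$ is null, every individual is indifferent among all reward levels $r$.
   Context: Individuals have privately known costs $\gamma_i\in\mathbb{R}$ of choosing $\beta_i=1$ (compliance) rather than $\beta_i=0$, distributed according to a continuously differentiable CDF $F$ with log-concave density $f$ of full support on $\mathbb{R}$. A classifier $\delta=(\delta_1,\delta_0)\in[0,1]^2$ assigns $d_i\in\{0,1\}$ with $\Pr[d_i=s_i\mid s_i]=\delta_{s_i}$, where the signal satisfies $\Pr[s_i=\beta_i]=\phi\in(\tfrac12,1]$. Let $\rho=\rho(\delta,\phi)=(\delta_1+\delta_0-1)(2\phi-1)$; $\delta$ is null if $\rho=0$. Individuals with $d_i=1$ receive reward $r$, rewards are financed by an equal tax on everyone (budget balance), and each individual additionally gets $t\cdot\pi$ where $\pi$ is the population compliance rate; individuals comply iff $\gamma_i\le r\rho$, so $\pi=F(r\rho)$. Individual $i$'s expected payoff from reward $r$, conditional on complying, is $V_1(r)=-\gamma_i+r\rho(1-F(r\rho))+tF(r\rho)$, and conditional on not complying is $V_0(r)=-r\rho F(r\rho)+tF(r\rho)$; an individual's payoff from $r$ is $V_1(r)$ if $\gamma_i\le r\rho$ and $V_0(r)$ otherwise. *)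

theory Defs
  imports "HOL-Analysis.Analysis"
begin

definition cdf_logconcave_density :: "(real \<Rightarrow> real) \<Rightarrow> (real \<Rightarrow> real) \<Rightarrow> bool" where
  "cdf_logconcave_density F f \<longleftrightarrow>
     mono F \<and>
     (F \<longlongrightarrow> 0) at_bot \<and> (F \<longlongrightarrow> 1) at_top \<and>
     (\<forall>x. (F has_real_derivative f x) (at x)) \<and>
     continuous_on UNIV f \<and>
     (\<forall>x. f x > 0) \<and>
     concave_on UNIV (\<lambda>x. ln (f x))"

definition rho :: "real \<Rightarrow> real \<Rightarrow> real \<Rightarrow> real" where
  "rho d1 d0 phi = (d1 + d0 - 1) * (2 * phi - 1)"

text \<open>Conditional payoff from reward r when complying (cost gamma).\<close>
definition V1 :: "(real \<Rightarrow> real) \<Rightarrow> real \<Rightarrow> real \<Rightarrow> real \<Rightarrow> real \<Rightarrow> real" where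
  "V1 F t \<rho> \<gamma> r = - \<gamma> + r * \<rho> * (1 - F (r * \<rho>)) + t * F (r * \<rho>)"

text \<open>Conditional payoff from reward r when not complying.\<close>
definition V0 :: "(real \<Rightarrow> real) \<Rightarrow> real \<Rightarrow> real \<Rightarrow> real \<Rightarrow> real" where
  "V0 F t \<rho> r = - r * \<rho> * F (r * \<rho>) + t * F (r * \<rho>)"

definition payoff :: "(real \<Rightarrow> real) \<Rightarrow> real \<Rightarrow> real \<Rightarrow> real \<Rightarrow> real \<Rightarrow> real" where
  "payoff F t \<rho> \<gamma> r = (if \<gamma> \<le> r * \<rho> then V1 F t \<rho> \<gamma> r else V0 F t \<rho> r)"

definition strictly_quasiconcave :: "(real \<Rightarrow> real) \<Rightarrow> bool" where
  "strictly_quasiconcave g \<longleftrightarrow>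
     (\<forall>x y l. x \<noteq> y \<and> 0 < l \<and> l < 1 \<longrightarrow> g (l * x + (1 - l) * y) > min (g x) (g y))"

end

theory Submission
  imports Defs
begin

(* Write g x = x (1 - F x) + t F x and h x = (t - x) F x, so that V1 = - gamma + g (r rho) and
   V0 = h (r rho). Their derivatives factor as g' = f ((1 - F) / f + t - x) and
   h' = f (t - F / f - x). Log-concavity of f makes F / f nondecreasing and the inverse hazard
   rate (1 - F) / f nonincreasing, so each bracket is a nonincreasing function minus the
   identity: it changes sign exactly once, from positive to negative. Hence g and h are
   single-peaked, which yields strict quasiconcavity and a maximiser, and both properties
   survive the reparametrisation r \<mapsto> r rho for rho \<noteq> 0. For rho = 0 the payoff does not
   depend on r. *)

lemma log_concave_shift_le:
  fixes f :: "real \<Rightarrow> real"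
  assumes pos: "\<And>x. f x > 0" and logconc: "concave_on UNIV (\<lambda>x. ln (f x))"
    and "s \<le> x" "0 \<le> d"
  shows "f (x + d) * f s \<le> f (s + d) * f x"
proof (cases "s = x")
  case False
  define g where "g x = ln (f x)" for x
  define u where "u = d / (x - s + d)"
  have "s < x" using \<open>s \<le> x\<close> False by simp
  then have u: "0 \<le> u" "u \<le> 1" "u * (x - s + d) = d"
    using \<open>0 \<le> d\<close> by (auto simp: u_def field_simps)
  have "(1 - u) * g s + u * g (x + d) \<le> g ((1 - u) * s + u * (x + d))"
    using concave_onD[OF logconc, of u s "x + d"] u by (simp add: g_def)
  moreover have "u * g s + (1 - u) * g (x + d) \<le> g (u * s + (1 - u) * (x + d))"
    using concave_onD[OF logconc, of "1 - u" s "x + d"] u by (simp add: g_def)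
  moreover have "(1 - u) * s + u * (x + d) = s + d" "u * s + (1 - u) * (x + d) = x"
    using u(3) by (simp_all add: algebra_simps)
  ultimately have "g (x + d) + g s \<le> g (s + d) + g x"
    by (simp add: algebra_simps)
  then have "ln (f (x + d) * f s) \<le> ln (f (s + d) * f x)"
    by (simp add: g_def ln_mult_pos[OF pos pos] add.commute)
  then show ?thesis
    using pos by simp
qed simp

lemma shifted_tendsto_at_bot:
  fixes F :: "real \<Rightarrow> real"
  assumes "(F \<longlongrightarrow> L) at_bot"
  shows "((\<lambda>s. F (s + d)) \<longlongrightarrow> L) at_bot"
proof -
  have "filterlim (\<lambda>s::real. s + d) at_bot at_bot"
    by (simp add: filterlim_at_bot eventually_at_bot_linorder) (metis add_le_cancel_right diff_add_cancel)
  from filterlim_compose[OF assms this] show ?thesis .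
qed

lemma cdf_density_ratio_mono:
  assumes "cdf_logconcave_density F f"
  shows "mono (\<lambda>x. F x / f x)"
proof (rule monoI)
  fix x y :: real
  assume "x \<le> y"
  from assms have pos: "\<And>x. f x > 0" and logconc: "concave_on UNIV (\<lambda>x. ln (f x))"
    and deriv: "\<And>x. (F has_real_derivative f x) (at x)" and lim: "(F \<longlongrightarrow> 0) at_bot"
    unfolding cdf_logconcave_density_def by auto
  define d where "d = y - x"
  \<comment> \<open>\<open>\<phi>\<close> vanishes at \<open>-\<infinity>\<close> and, by log-concavity, is nondecreasing up to \<open>x\<close>; hence \<open>\<phi> x \<ge> 0\<close>.\<close>
  define \<phi> where "\<phi> s = F (s + d) * f x - f y * F s" for s
  have \<phi>_deriv: "(\<phi> has_real_derivative f (s + d) * f x - f y * f s) (at s)" for s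
    unfolding \<phi>_def using DERIV_shift[of F "f (s + d)" s d] deriv[of "s + d"]
    by (auto intro!: derivative_eq_intros deriv)
  have \<phi>_mono: "\<phi> s \<le> \<phi> x" if "s \<le> x" for s
  proof (rule DERIV_nonneg_imp_nondecreasing[OF that])
    fix z assume "s \<le> z" "z \<le> x"
    then have "f y * f z \<le> f (z + d) * f x"
      using log_concave_shift_le[OF pos logconc, of z x d] \<open>x \<le> y\<close> by (simp add: d_def)
    then show "\<exists>D. (\<phi> has_real_derivative D) (at z) \<and> 0 \<le> D"
      using \<phi>_deriv[of z] by (metis diff_ge_0_iff_ge)
  qed
  have "(\<phi> \<longlongrightarrow> 0 * f x - f y * 0) at_bot"
    unfolding \<phi>_def by (intro tendsto_intros shifted_tendsto_at_bot lim)
  moreover have "eventually (\<lambda>s. \<phi> s \<le> \<phi> x) at_bot"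
    by (auto simp: eventually_at_bot_linorder intro: \<phi>_mono)
  ultimately have "0 \<le> \<phi> x"
    by (simp add: tendsto_upperbound)
  then show "F x / f x \<le> F y / f y"
    using pos[of x] pos[of y] by (simp add: \<phi>_def d_def divide_simps mult.commute)
qed

lemma cdf_logconcave_density_mirror:
  assumes "cdf_logconcave_density F f"
  shows "cdf_logconcave_density (\<lambda>x. 1 - F (- x)) (\<lambda>x. f (- x))"
proof -
  from assms have "mono F" and pos: "\<And>x. f x > 0" and logconc: "concave_on UNIV (\<lambda>x. ln (f x))"
    and "continuous_on UNIV f" and deriv: "\<And>x. (F has_real_derivative f x) (at x)"
    and "(F \<longlongrightarrow> 0) at_bot" "(F \<longlongrightarrow> 1) at_top"
    unfolding cdf_logconcave_density_def by auto
  have "mono (\<lambda>x. 1 - F (- x))"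
    using \<open>mono F\<close> by (auto simp: mono_def)
  moreover have "((\<lambda>x. F (- x)) \<longlongrightarrow> 1) at_bot"
    using \<open>(F \<longlongrightarrow> 1) at_top\<close> by (simp add: filterlim_at_top_mirror)
  then have "((\<lambda>x. 1 - F (- x)) \<longlongrightarrow> 0) at_bot"
    by (auto intro: tendsto_eq_intros)
  moreover have "((\<lambda>x. F (- x)) \<longlongrightarrow> 0) at_top"
    using \<open>(F \<longlongrightarrow> 0) at_bot\<close> by (simp add: filterlim_at_bot_mirror)
  then have "((\<lambda>x. 1 - F (- x)) \<longlongrightarrow> 1) at_top"
    by (auto intro: tendsto_eq_intros)
  moreover have "((\<lambda>x. 1 - F (- x)) has_real_derivative f (- x)) (at x)" for x
    using deriv[of "- x"] by (auto intro!: derivative_eq_intros simp: DERIV_mirror)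
  moreover have "continuous_on UNIV (\<lambda>x. f (- x))"
    by (intro continuous_on_compose2[OF \<open>continuous_on UNIV f\<close>] continuous_intros) auto
  moreover have "concave_on UNIV (\<lambda>x. ln (f (- x)))"
  proof (rule concave_on_linorderI)
    fix u x y :: real
    assume "0 < u" "u < 1"
    then show "(1 - u) * ln (f (- x)) + u * ln (f (- y)) \<le> ln (f (- ((1 - u) *\<^sub>R x + u *\<^sub>R y)))"
      using concave_onD[OF logconc, of u "- x" "- y"] by (simp add: algebra_simps)
  qed simp
  ultimately show ?thesis
    using pos unfolding cdf_logconcave_density_def by blast
qed

lemma survival_density_ratio_antimono:
  assumes "cdf_logconcave_density F f"
  shows "antimono (\<lambda>x. (1 - F x) / f x)"
proof (rule antimonoI)
  fix x y :: real
  assume "x \<le> y"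
  then have "(1 - F (- (- y))) / f (- (- y)) \<le> (1 - F (- (- x))) / f (- (- x))"
    using cdf_density_ratio_mono[OF cdf_logconcave_density_mirror[OF assms]]
    by (auto dest: monoD[of _ "- y" "- x"])
  then show "(1 - F y) / f y \<le> (1 - F x) / f x" by simp
qed

lemma antimono_crossing_point:
  fixes \<phi> :: "real \<Rightarrow> real"
  assumes "antimono \<phi>"
  obtains c where "\<And>x. x < c \<Longrightarrow> x < \<phi> x" "\<And>x. c < x \<Longrightarrow> \<phi> x < x"
proof
  define S where "S = {x. x < \<phi> x}"
  have "min 0 (\<phi> 0) - 1 < \<phi> 0" "\<phi> 0 \<le> \<phi> (min 0 (\<phi> 0) - 1)"
    using antimonoD[OF assms, of "min 0 (\<phi> 0) - 1" 0] by auto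
  then have "min 0 (\<phi> 0) - 1 \<in> S"
    unfolding S_def mem_Collect_eq by linarith
  moreover have "x \<le> max 0 (\<phi> 0)" if "x \<in> S" for x
    using antimonoD[OF assms, of 0 x] that by (force simp: S_def)
  ultimately have S: "S \<noteq> {}" "bdd_above S"
    by (auto intro: bdd_aboveI[of S "max 0 (\<phi> 0)"])
  show "x < \<phi> x" if "x < Sup S" for x
  proof -
    obtain y where "y \<in> S" "x < y"
      using \<open>x < Sup S\<close> S by (auto simp: less_cSup_iff)
    then show ?thesis
      using antimonoD[OF assms, of x y] by (simp add: S_def)
  qed
  show "\<phi> x < x" if "Sup S < x" for x
  proof (rule ccontr)
    assume "\<not> \<phi> x < x"
    obtain z where "Sup S < z" "z < x"
      using \<open>Sup S < x\<close> dense by blast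
    then have "z < \<phi> z"
      using \<open>\<not> \<phi> x < x\<close> antimonoD[OF assms, of z x] by simp
    then have "z \<le> Sup S"
      using S by (simp add: S_def cSup_upper)
    with \<open>Sup S < z\<close> show False by simp
  qed
qed

definition single_peaked :: "(real \<Rightarrow> real) \<Rightarrow> real \<Rightarrow> bool" where
  "single_peaked G c \<longleftrightarrow>
     (\<forall>a b. a < b \<and> b \<le> c \<longrightarrow> G a < G b) \<and> (\<forall>a b. c \<le> a \<and> a < b \<longrightarrow> G b < G a)"

lemma single_peaked_le_peak:
  assumes "single_peaked G c"
  shows "G x \<le> G c"
  using assms unfolding single_peaked_def by (metis linorder_linear order_le_less order_less_imp_le)

lemma single_peaked_strictly_quasiconcave:
  assumes "single_peaked G c"
  shows "strictly_quasiconcave G"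
  unfolding strictly_quasiconcave_def
proof (intro allI impI)
  fix x y l :: real
  assume "x \<noteq> y \<and> 0 < l \<and> l < 1"
  then have "min x y < l * x + (1 - l) * y \<and> l * x + (1 - l) * y < max x y"
    using mult_strict_right_mono[of l 1 "y - x"] mult_strict_right_mono[of l 1 "x - y"]
    by (cases "x < y") (auto simp: min_def max_def algebra_simps)
  moreover have "min (G x) (G y) \<le> G (min x y)" "min (G x) (G y) \<le> G (max x y)"
    by (simp_all add: min_def max_def)
  ultimately show "min (G x) (G y) < G (l * x + (1 - l) * y)"
    using assms unfolding single_peaked_def by (smt (verit))
qed

lemma single_peaked_if_deriv_crossing:
  fixes G w \<phi> :: "real \<Rightarrow> real"
  assumes deriv: "\<And>x. (G has_real_derivative w x * (\<phi> x - x)) (at x)"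
    and pos: "\<And>x. w x > 0" and "antimono \<phi>"
  obtains c where "single_peaked G c"
proof -
  obtain c where above: "\<And>x. x < c \<Longrightarrow> x < \<phi> x" and below: "\<And>x. c < x \<Longrightarrow> \<phi> x < x"
    using antimono_crossing_point[OF \<open>antimono \<phi>\<close>] by blast
  have cont: "continuous_on A G" for A
    using deriv by (meson DERIV_isCont continuous_at_imp_continuous_on)
  have "G a < G b" if "a < b" "b \<le> c" for a b
    using \<open>a < b\<close>
  proof (rule DERIV_pos_imp_increasing_open)
    fix x assume "a < x" "x < b"
    then show "\<exists>D. (G has_real_derivative D) (at x) \<and> 0 < D"
      using deriv pos above[of x] that by (intro exI conjI) auto
  qed (rule cont)
  moreover have "G b < G a" if "c \<le> a" "a < b" for a b
    using \<open>a < b\<close>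
  proof (rule DERIV_neg_imp_decreasing_open)
    fix x assume "a < x" "x < b"
    then show "\<exists>D. (G has_real_derivative D) (at x) \<and> D < 0"
      using deriv pos below[of x] that by (intro exI conjI) (auto simp: mult_pos_neg)
  qed (rule cont)
  ultimately show thesis
    using that unfolding single_peaked_def by blast
qed

lemma single_peaked_rescaled:
  assumes "single_peaked G c" "p \<noteq> 0"
  shows "strictly_quasiconcave (\<lambda>r. k + G (r * p))"
    and "\<exists>r. \<forall>r'. k + G (r' * p) \<le> k + G (r * p)"
proof -
  have G: "strictly_quasiconcave G"
    using assms(1) by (rule single_peaked_strictly_quasiconcave)
  show "strictly_quasiconcave (\<lambda>r. k + G (r * p))"
    unfolding strictly_quasiconcave_def
  proof (intro allI impI)
    fix x y l :: real
    assume "x \<noteq> y \<and> 0 < l \<and> l < 1"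
    with G \<open>p \<noteq> 0\<close> have "min (G (x * p)) (G (y * p)) < G (l * (x * p) + (1 - l) * (y * p))"
      unfolding strictly_quasiconcave_def by simp
    then show "min (k + G (x * p)) (k + G (y * p)) < k + G ((l * x + (1 - l) * y) * p)"
      by (simp add: algebra_simps)
  qed
  show "\<exists>r. \<forall>r'. k + G (r' * p) \<le> k + G (r * p)"
    using single_peaked_le_peak[OF assms(1)] \<open>p \<noteq> 0\<close> by (intro exI[of _ "c / p"]) simp
qed

lemma compliant_payoff_deriv:
  assumes "(F has_real_derivative f x) (at x)" "f x \<noteq> 0"
  shows "((\<lambda>x. x * (1 - F x) + t * F x) has_real_derivative f x * (((1 - F x) / f x + t) - x)) (at x)"
proof -
  have "((\<lambda>x. x * (1 - F x) + t * F x) has_real_derivative (1 - F x) - x * f x + t * f x) (at x)"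
    using assms(1) by (auto intro!: derivative_eq_intros)
  moreover have "(1 - F x) - x * f x + t * f x = f x * (((1 - F x) / f x + t) - x)"
    using assms(2) by (simp add: field_simps)
  ultimately show ?thesis
    by simp
qed

lemma noncompliant_payoff_deriv:
  assumes "(F has_real_derivative f x) (at x)" "f x \<noteq> 0"
  shows "((\<lambda>x. - x * F x + t * F x) has_real_derivative f x * ((t - F x / f x) - x)) (at x)"
proof -
  have "((\<lambda>x. - x * F x + t * F x) has_real_derivative - F x - x * f x + t * f x) (at x)"
    using assms(1) by (auto intro!: derivative_eq_intros)
  moreover have "- F x - x * f x + t * f x = f x * ((t - F x / f x) - x)"
    using assms(2) by (simp add: field_simps)
  ultimately show ?thesis
    by simp
qed

lemma compliant_payoff_single_peaked:
  assumes "cdf_logconcave_density F f"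
  obtains c where "single_peaked (\<lambda>x. x * (1 - F x) + t * F x) c"
proof -
  from assms have deriv: "\<And>x. (F has_real_derivative f x) (at x)" and pos: "\<And>x. f x > 0"
    unfolding cdf_logconcave_density_def by auto
  have payoff_deriv: "((\<lambda>x. x * (1 - F x) + t * F x) has_real_derivative f x * (((1 - F x) / f x + t) - x)) (at x)"
    for x using compliant_payoff_deriv[of F f x] deriv[of x] pos[of x] by simp
  have crossing_antimono: "antimono (\<lambda>x. (1 - F x) / f x + t)"
    using survival_density_ratio_antimono[OF assms] by (auto simp: antimono_def)
  show thesis
    using single_peaked_if_deriv_crossing[OF payoff_deriv pos crossing_antimono] that .
qed

lemma noncompliant_payoff_single_peaked:
  assumes "cdf_logconcave_density F f"
  obtains c where "single_peaked (\<lambda>x. - x * F x + t * F x) c"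
proof -
  from assms have deriv: "\<And>x. (F has_real_derivative f x) (at x)" and pos: "\<And>x. f x > 0"
    unfolding cdf_logconcave_density_def by auto
  have payoff_deriv: "((\<lambda>x. - x * F x + t * F x) has_real_derivative f x * ((t - F x / f x) - x)) (at x)"
    for x using noncompliant_payoff_deriv[of F f x] deriv[of x] pos[of x] by simp
  have crossing_antimono: "antimono (\<lambda>x. t - F x / f x)"
    using cdf_density_ratio_mono[OF assms] by (auto simp: antimono_def mono_def)
  show thesis
    using single_peaked_if_deriv_crossing[OF payoff_deriv pos crossing_antimono] that .
qed

theorem proposition5:
  fixes F f :: "real \<Rightarrow> real" and d1 d0 phi t :: real
  assumes F: "cdf_logconcave_density F f"
    and d1: "0 \<le> d1" "d1 \<le> 1" and d0: "0 \<le> d0" "d0 \<le> 1"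
    and phi: "1/2 < phi" "phi \<le> 1"
    and t: "t \<ge> 0"
  shows "(rho d1 d0 phi \<noteq> 0 \<longrightarrow>
           (\<forall>\<gamma>. strictly_quasiconcave (V1 F t (rho d1 d0 phi) \<gamma>) \<and>
                 (\<exists>r. \<forall>r'. V1 F t (rho d1 d0 phi) \<gamma> r' \<le> V1 F t (rho d1 d0 phi) \<gamma> r)) \<and>
           strictly_quasiconcave (V0 F t (rho d1 d0 phi)) \<and>
           (\<exists>r. \<forall>r'. V0 F t (rho d1 d0 phi) r' \<le> V0 F t (rho d1 d0 phi) r))
       \<and> (rho d1 d0 phi = 0 \<longrightarrow>
           (\<forall>\<gamma> r r'. payoff F t (rho d1 d0 phi) \<gamma> r = payoff F t (rho d1 d0 phi) \<gamma> r'))"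
proof -
  \<comment> \<open>The argument works for every \<open>t\<close> and every value of \<open>rho\<close>.\<close>
  define p where "p = rho d1 d0 phi"
  define g where "g = (\<lambda>x. x * (1 - F x) + t * F x)"
  define h where "h = (\<lambda>x. - x * F x + t * F x)"
  obtain c where c: "single_peaked g c"
    using compliant_payoff_single_peaked[OF F] unfolding g_def .
  obtain c' where c': "single_peaked h c'"
    using noncompliant_payoff_single_peaked[OF F] unfolding h_def .
  have V1: "V1 F t p \<gamma> = (\<lambda>r. - \<gamma> + g (r * p))" for \<gamma>
    by (simp add: V1_def g_def fun_eq_iff)
  have V0: "V0 F t p = (\<lambda>r. 0 + h (r * p))"
    by (simp add: V0_def h_def fun_eq_iff)
  have "p \<noteq> 0 \<longrightarrow>
           (\<forall>\<gamma>. strictly_quasiconcave (V1 F t p \<gamma>) \<and> (\<exists>r. \<forall>r'. V1 F t p \<gamma> r' \<le> V1 F t p \<gamma> r)) \<and>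
           strictly_quasiconcave (V0 F t p) \<and> (\<exists>r. \<forall>r'. V0 F t p r' \<le> V0 F t p r)"
    unfolding V1 V0 using single_peaked_rescaled[OF c] single_peaked_rescaled[OF c'] by blast
  moreover have "p = 0 \<longrightarrow> (\<forall>\<gamma> r r'. payoff F t p \<gamma> r = payoff F t p \<gamma> r')"
    by (simp add: payoff_def V1_def V0_def)
  ultimately show ?thesis
    unfolding p_def by blast
qed

end
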